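(* For all $N\subseteq\mathbf{U}$, $w\in\mathbb{W}(N)$ and $i\in N$, we have $\bar v^\star_{w^{r^\star}_{-i}}=(\bar v^\star_w)_{-i}$.
   Context: $\mathbf{U}$ is a finite set of players; cardinalities of $N,S,B$ are $n,s,b$. $\Pi(N)$ is the set of partitions of $N$ ($\Pi(\emptyset)=\{\emptyset\}$). $p^\star$ is the Ewens distribution $p^\star_N(\pi)=\frac{\prod_{B\in\pi}(b-1)!}{n!}$. $\pi_{+i\leadsto B}=(\pi\setminus\{B\})\cup\{B\cup\{i\}\}$ for $B\in\pi$, $\pi_{+i\leadsto\emptyset}=\pi\cup\{\{i\}\}$. Embedded coalitions $\mathcal{E}(N)=\{(S,\pi):S\subseteq N,\pi\in\Pi(N\setminus S)\}$; a TUX game on $N$ is $w:\mathcal{E}(N)\to\mathbb{R}$ with $w(\emptyset,\pi)=0$; $\mathbb{W}(N)$ their set. The restriction operator $r^\star$: $w^{r^\star}_{-i}\in\mathbb{W}(N\setminus\{i\})$, $w^{r^\star}_{-i}(S,\pi)=\frac{1}{n-s}w(S,\pi_{+i\leadsto\emptyset})+\sum_{B\in\pi}\frac{b}{n-s}w(S,\pi_{+i\leadsto B})$ for $(S,\pi)\in\mathcal{E}(N\setminus\{i\})$. For $w\in\mathbb{W}(M)$, the average TU game $\bar v^\star_w$ on $M$ is $\bar v^\star_w(S)=\sum_{\pi\in\Pi(M\setminus S)}p^\star_{M\setminus S}(\pi)w(S,\pi)$ for $S\subseteq M$. For a TU game $v$ on $N$, $v_{-i}$ is its restriction to subsets of $N\setminus\{i\}$.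 *)

theory Defs
  imports Complex_Main "HOL-Library.Disjoint_Sets"
begin

text \<open>Partitions of a set N (the empty set has exactly one partition, the empty one).\<close>
definition partitions :: "'a set \<Rightarrow> 'a set set set" where
  "partitions N = {P. partition_on N P}"

definition ewens :: "'a set \<Rightarrow> 'a set set \<Rightarrow> real" where
  "ewens N P = (\<Prod>B\<in>P. fact (card B - 1)) / fact (card N)"

definition add_to :: "'a set set \<Rightarrow> 'a \<Rightarrow> 'a set \<Rightarrow> 'a set set" where
  "add_to P i B = (if B = {} then insert {i} P else insert (insert i B) (P - {B}))"

text \<open>A TUX game on N: a function on embedded coalitions (S,P) with S \<subseteq> N and
  P a partition of N - S, vanishing on the empty coalition. Values outside the
  embedded coalitions are irrelevant.\<close>
definition tux_game :: "'a set \<Rightarrow> ('a set \<Rightarrow> 'a set set \<Rightarrow> real) \<Rightarrow> bool" where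
  "tux_game N w \<longleftrightarrow> (\<forall>P\<in>partitions N. w {} P = 0)"

definition restr :: "'a set \<Rightarrow> ('a set \<Rightarrow> 'a set set \<Rightarrow> real) \<Rightarrow> 'a \<Rightarrow> 'a set \<Rightarrow> 'a set set \<Rightarrow> real" where
  "restr N w i S P =
     1 / (real (card N) - real (card S)) * w S (add_to P i {})
     + (\<Sum>B\<in>P. real (card B) / (real (card N) - real (card S)) * w S (add_to P i B))"

definition avg_game :: "'a set \<Rightarrow> ('a set \<Rightarrow> 'a set set \<Rightarrow> real) \<Rightarrow> 'a set \<Rightarrow> real" where
  "avg_game M w S = (\<Sum>P\<in>partitions (M - S). ewens (M - S) P * w S P)"

end

theory Submission
  imports Defs
begin

text \<open>Every partition of \<open>insert i M\<close> arises in exactly one way from a partition \<open>P\<close> of \<open>M\<close>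
  by putting \<open>i\<close> into a block \<open>B \<in> P\<close> or into a new singleton block, and its Ewens weight is
  that of \<open>P\<close> times \<open>|B| / |M + i|\<close>, resp. \<open>1 / |M + i|\<close>. Grouping the sum defining the average
  game of \<open>w\<close> by \<open>P\<close> therefore turns each inner sum into \<open>p\<^sup>\<star>(P)\<close> times the restricted game at
  \<open>P\<close>.\<close>

lemma partition_on_add_to:
  assumes P: "partition_on M P" and i: "i \<notin> M" and B: "B \<in> insert {} P"
  shows "partition_on (insert i M) (add_to P i B)"
proof (cases "B = {}")
  case True
  then show ?thesis using P i unfolding add_to_def partition_on_def disjoint_def by auto
next
  case False
  with B have "B \<in> P" by auto
  then show ?thesis using P i False unfolding add_to_def partition_on_def disjoint_def
    by (auto; blast)
qed

lemma add_to_blocks_containing: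
  assumes "partition_on M P" and "i \<notin> M" and "B \<in> insert {} P"
  shows "{C \<in> add_to P i B. i \<in> C} = {insert i B}"
  using assms unfolding add_to_def partition_on_def by auto

lemma add_to_remove_player:
  assumes P: "partition_on M P" and i: "i \<notin> M" and B: "B \<in> insert {} P"
  shows "(\<lambda>C. C - {i}) ` add_to P i B - {{}} = P"
proof -
  have "\<And>C. C \<in> P \<Longrightarrow> C - {i} = C" using P i unfolding partition_on_def by auto
  moreover have "{} \<notin> P" using P unfolding partition_on_def by auto
  ultimately show ?thesis using B i P unfolding add_to_def partition_on_def
    by (auto simp: image_iff)
qed

lemma inj_on_add_to:
  assumes i: "i \<notin> M"
  shows "inj_on (\<lambda>(P, B). add_to P i B) (SIGMA P:partitions M. insert {} P)"
proof (rule inj_onI, clarify)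
  fix P B P' B'
  assume P: "P \<in> partitions M" "B \<in> insert {} P" and P': "P' \<in> partitions M" "B' \<in> insert {} P'"
    and eq: "add_to P i B = add_to P' i B'"
  then have part: "partition_on M P" "partition_on M P'" by (auto simp: partitions_def)
  show "P = P' \<and> B = B'"
  proof
    show "P = P'"
      using add_to_remove_player[OF part(1) i P(2)] add_to_remove_player[OF part(2) i P'(2)] eq
      by simp
    have "insert i B = insert i B'"
      using add_to_blocks_containing[OF part(1) i P(2)] add_to_blocks_containing[OF part(2) i P'(2)] eq
      by simp
    moreover have "i \<notin> B" "i \<notin> B'" using part P(2) P'(2) i by (auto simp: partition_on_def)
    ultimately show "B = B'" by (metis insert_ident)
  qed
qed

lemma partition_on_insert_add_toE:
  assumes Q: "partition_on (insert i M) Q" and i: "i \<notin> M"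
  obtains P B where "partition_on M P" "B \<in> insert {} P" "Q = add_to P i B"
proof -
  obtain C where C: "C \<in> Q" "i \<in> C" using Q unfolding partition_on_def by auto
  have Q_eq: "Q = insert C (Q - {C})" using C by auto
  have disj: "disjnt C (\<Union>(Q - {C}))"
    using Q C unfolding partition_on_def disjoint_def disjnt_def by blast
  have rest: "partition_on (insert i M - C) (Q - {C})" and CM: "C \<subseteq> insert i M"
    using partition_on_insert[of C "Q - {C}" "insert i M"] Q Q_eq disj by auto
  show thesis
  proof (cases "C = {i}")
    case True
    have "partition_on M (Q - {C})" using rest True i by simp
    moreover have "Q = add_to (Q - {C}) i {}" using C True unfolding add_to_def by auto
    ultimately show thesis using that by blast
  next
    case False
    define B where "B = C - {i}"
    have B_ne: "B \<noteq> {}" using False C unfolding B_def by auto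
    have "B \<notin> Q"
    proof
      assume "B \<in> Q"
      moreover have "B \<noteq> C" using C B_def by auto
      ultimately have "B \<inter> C = {}" using Q C unfolding partition_on_def disjoint_def by blast
      with B_ne show False unfolding B_def by auto
    qed
    have "disjnt B (\<Union>(Q - {C}))" using disj by (auto simp: B_def disjnt_def)
    moreover have "M - B = insert i M - C" using C i by (auto simp: B_def)
    with rest have "partition_on (M - B) (Q - {C})" by simp
    moreover have "B \<subseteq> M" using CM i by (auto simp: B_def)
    ultimately have "partition_on M (insert B (Q - {C}))"
      using B_ne by (simp add: partition_on_insert)
    moreover have "Q = add_to (insert B (Q - {C})) i B"
      using C \<open>B \<notin> Q\<close> B_ne unfolding add_to_def B_def by (auto simp: insert_absorb)
    ultimately show thesis using that by blast
  qed
qed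

lemma bij_betw_add_to:
  assumes "i \<notin> M"
  shows "bij_betw (\<lambda>(P, B). add_to P i B) (SIGMA P:partitions M. insert {} P)
           (partitions (insert i M))"
  unfolding bij_betw_def
proof
  show "inj_on (\<lambda>(P, B). add_to P i B) (SIGMA P:partitions M. insert {} P)"
    using inj_on_add_to[OF assms] .
  show "(\<lambda>(P, B). add_to P i B) ` (SIGMA P:partitions M. insert {} P) = partitions (insert i M)"
  proof
    show "(\<lambda>(P, B). add_to P i B) ` (SIGMA P:partitions M. insert {} P) \<subseteq> partitions (insert i M)"
      using partition_on_add_to[OF _ assms] by (auto simp: partitions_def)
    show "partitions (insert i M) \<subseteq> (\<lambda>(P, B). add_to P i B) ` (SIGMA P:partitions M. insert {} P)"
    proof
      fix Q assume "Q \<in> partitions (insert i M)"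
      then obtain P B where "partition_on M P" "B \<in> insert {} P" "Q = add_to P i B"
        using partition_on_insert_add_toE[OF _ assms] by (auto simp: partitions_def)
      then show "Q \<in> (\<lambda>(P, B). add_to P i B) ` (SIGMA P:partitions M. insert {} P)"
        by (auto simp: partitions_def image_iff)
    qed
  qed
qed

lemma sum_partitions_insert:
  assumes M: "finite M" and i: "i \<notin> M"
  shows "(\<Sum>Q\<in>partitions (insert i M). f Q) =
         (\<Sum>P\<in>partitions M. \<Sum>B\<in>insert {} P. f (add_to P i B))"
proof -
  have "finite (partitions M)"
    using M finitely_many_partition_on unfolding partitions_def by blast
  moreover have "\<forall>P\<in>partitions M. finite (insert {} P)"
    using M finite_elements unfolding partitions_def by blast
  ultimately have "(\<Sum>P\<in>partitions M. \<Sum>B\<in>insert {} P. f (add_to P i B)) =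
                   (\<Sum>(P, B)\<in>(SIGMA P:partitions M. insert {} P). f (add_to P i B))"
    by (rule sum.Sigma)
  also have "\<dots> = (\<Sum>Q\<in>partitions (insert i M). f Q)"
    using sum.reindex_bij_betw[OF bij_betw_add_to[OF i], of f] by (simp add: case_prod_beta')
  finally show ?thesis by simp
qed

lemma ewens_add_to:
  assumes M: "finite M" and i: "i \<notin> M" and P: "partition_on M P" and B: "B \<in> insert {} P"
  shows "ewens (insert i M) (add_to P i B) =
         ewens M P * (if B = {} then 1 else real (card B)) / real (card (insert i M))"
proof -
  have finP: "finite P" using M P finite_elements by blast
  have iP: "\<And>C. C \<in> P \<Longrightarrow> i \<notin> C" using P i unfolding partition_on_def by auto
  have fact_insert: "fact (card (insert i M)) = real (card (insert i M)) * fact (card M)"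
    using M i by simp
  have "(\<Prod>C\<in>add_to P i B. fact (card C - 1) :: real) =
        (\<Prod>C\<in>P. fact (card C - 1)) * (if B = {} then 1 else real (card B))"
  proof (cases "B = {}")
    case True
    have "{i} \<notin> P" using iP by auto
    then show ?thesis using True finP unfolding add_to_def by simp
  next
    case False
    then have BP: "B \<in> P" using B by auto
    have "finite B" using BP P M unfolding partition_on_def by (meson Union_upper finite_subset)
    have "insert i B \<notin> P - {B}" using iP by auto
    then have "(\<Prod>C\<in>add_to P i B. fact (card C - 1) :: real) =
               fact (card (insert i B) - 1) * (\<Prod>C\<in>P - {B}. fact (card C - 1))"
      using False finP unfolding add_to_def by simp
    also have "fact (card (insert i B) - 1) = real (card B) * fact (card B - 1)"
      using \<open>finite B\<close> iP[OF BP] False by (simp add: fact_reduce card_gt_0_iff)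
    also have "(\<Prod>C\<in>P. fact (card C - 1) :: real) = fact (card B - 1) * (\<Prod>C\<in>P - {B}. fact (card C - 1))"
      by (rule prod.remove[OF finP BP])
    ultimately show ?thesis using False by simp
  qed
  then show ?thesis unfolding ewens_def fact_insert by simp
qed

lemma sum_partitions_insert_ewens:
  assumes M: "finite M" and i: "i \<notin> M"
  shows "(\<Sum>Q\<in>partitions (insert i M). ewens (insert i M) Q * f Q) =
         (\<Sum>P\<in>partitions M. ewens M P *
            ((f (add_to P i {}) + (\<Sum>B\<in>P. real (card B) * f (add_to P i B))) / real (card (insert i M))))"
  unfolding sum_partitions_insert[OF assms]
proof (rule sum.cong[OF refl])
  fix P assume "P \<in> partitions M"
  then have P: "partition_on M P" by (simp add: partitions_def)
  have "{} \<notin> P" "finite P" using P M finite_elements by (auto simp: partition_on_def)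
  then show "(\<Sum>B\<in>insert {} P. ewens (insert i M) (add_to P i B) * f (add_to P i B)) =
             ewens M P * ((f (add_to P i {}) + (\<Sum>B\<in>P. real (card B) * f (add_to P i B))) /
                          real (card (insert i M)))"
    using ewens_add_to[OF M i P]
    by (auto simp: sum_distrib_left sum_divide_distrib add_divide_distrib algebra_simps
             intro!: sum.cong)
qed

lemma restr_eq_weighted_sum:
  assumes "finite N" and "S \<subseteq> N"
  shows "restr N w i S P =
         (w S (add_to P i {}) + (\<Sum>B\<in>P. real (card B) * w S (add_to P i B))) / real (card (N - S))"
proof -
  have "real (card N) - real (card S) = real (card (N - S))"
    using assms by (simp add: card_Diff_subset finite_subset card_mono of_nat_diff)
  then show ?thesis
    unfolding restr_def by (simp add: add_divide_distrib sum_divide_distrib)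
qed

theorem lemma2:
  fixes N :: "'a set" and w :: "'a set \<Rightarrow> 'a set set \<Rightarrow> real" and i :: 'a
  assumes "finite N" and "tux_game N w" and "i \<in> N"
  shows "\<forall>S. S \<subseteq> N - {i} \<longrightarrow> avg_game (N - {i}) (restr N w i) S = avg_game N w S"
proof (intro allI impI)
  fix S assume S: "S \<subseteq> N - {i}"
  define M where "M = N - {i} - S"
  have M: "finite M" "i \<notin> M" using assms(1) by (auto simp: M_def)
  have N_minus_S: "N - S = insert i M" using S assms(3) by (auto simp: M_def)
  have "S \<subseteq> N" using S by blast
  have "avg_game N w S = (\<Sum>Q\<in>partitions (insert i M). ewens (insert i M) Q * w S Q)"
    by (simp add: avg_game_def N_minus_S)
  also have "\<dots> = (\<Sum>P\<in>partitions M. ewens M P * restr N w i S P)"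
    unfolding sum_partitions_insert_ewens[OF M] restr_eq_weighted_sum[OF assms(1) \<open>S \<subseteq> N\<close>] N_minus_S ..
  also have "\<dots> = avg_game (N - {i}) (restr N w i) S"
    by (simp add: avg_game_def M_def)
  finally show "avg_game (N - {i}) (restr N w i) S = avg_game N w S" by simp
qed

end
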